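(* There exist a finite-horizon two-player Markov game $\mathcal{G}=(S,A_1,A_2,P,R_1,H,G)$, an abstraction $\phi$, and two peer policies $\pi_2^{e}$ and $\pi_2^{e+1}$ (a peer policy update $\pi_2^e\to\pi_2^{e+1}$) such that some $u\in\mathrm{Core}_\phi(\mathcal{S}_e)$ satisfies $u\notin\mathrm{Core}_\phi(\mathcal{S}_{e+1})$. Moreover, such examples can be chosen so that, after removing the trivial terminal (goal) symbol from all abstract trajectories, $\mathrm{Core}_\phi(\mathcal{S}_e)\cap\mathrm{Core}_\phi(\mathcal{S}_{e+1})=\varnothing$.
   Context: A two-player finite-horizon Markov game $\mathcal{G}=(S,A_1,A_2,P,R_1,H,G)$ has state set $S$, action sets $A_1$ (focal agent) and $A_2$ (peer), joint transition kernel $P(s'\mid s,a_1,a_2)$, focal reward $R_1(s,a_1,a_2)$, horizon $H<\infty$, and goal set $G\subseteq S$ (episodes terminate on first visit to $G$). In episode $e$ the peer follows a Markov policy $\pi_2^e(\cdot\mid s)$, inducing the single-agent MDP $M_e=(S,A_1,P_e,R_e,H,G)$ with $P_e(s'\mid s,a_1)=\sum_{a_2\in A_2}P(s'\mid s,a_1,a_2)\pi_2^e(a_2\mid s)$ and $R_e(s,a_1)=\sum_{a_2}R_1(s,a_1,a_2)\pi_2^e(a_2\mid s)$. A trajectory is $\tau=(s_1,a_1,\dots,s_T,a_T)$ with $T\le H$, a word over $S\times A_1$; $\mathcal{S}_e$ is the set of successful trajectories of $M_e$, i.e. trajectories realizable in $M_e$ (each transition $s_t\to s_{t+1}$ has positive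 probability under $P_e(\cdot\mid s_t,a_t)$, from the game's initial state) that reach $G$ at some $t\le H$. For sequences $u,v$, $u\preccurlyeq v$ means $u$ is a (not necessarily contiguous) subsequence of $v$. An abstraction is a map $\phi:S\times A_1\to\Sigma$ applied letterwise. The episode-wise invariant core is $\mathrm{Core}_\phi(\mathcal{S}_e)=\max_{\preccurlyeq}\{u\in\Sigma^{\le H}:\ \forall\tau\in\mathcal{S}_e,\ u\preccurlyeq\phi(\tau)\}$, the set of $\preccurlyeq$-maximal common subsequences (of length at most $H$) of all $\phi(\tau)$, $\tau\in\mathcal{S}_e$. *)

theory Defs
  imports Complex_Main "HOL-Library.Sublist"
begin

text \<open>States, actions (of both players)
and abstract symbols are encoded as natural numbers; the actual sets are the
finite carriers below. trans g s a1 a2 s' is P(s' | s, a1, a2).\<close>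

record mgame =
  states  :: "nat set"
  act1    :: "nat set"
  act2    :: "nat set"
  trans   :: "nat \<Rightarrow> nat \<Rightarrow> nat \<Rightarrow> nat \<Rightarrow> real"
  rew1    :: "nat \<Rightarrow> nat \<Rightarrow> nat \<Rightarrow> real"
  horizon :: nat
  goal    :: "nat set"
  init    :: nat

definition wf_game :: "mgame \<Rightarrow> bool" where
  "wf_game g \<longleftrightarrow>
     finite (states g) \<and> states g \<noteq> {} \<and>
     finite (act1 g) \<and> act1 g \<noteq> {} \<and>
     finite (act2 g) \<and> act2 g \<noteq> {} \<and>
     init g \<in> states g \<and> goal g \<subseteq> states g \<and>
     (\<forall>s\<in>states g. \<forall>a1\<in>act1 g. \<forall>a2\<in>act2 g.
        (\<forall>s'. trans g s a1 a2 s' \<ge> 0) \<and>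
        (\<forall>s'. s' \<notin> states g \<longrightarrow> trans g s a1 a2 s' = 0) \<and>
        (\<Sum>s'\<in>states g. trans g s a1 a2 s') = 1)"

definition peer_policy :: "mgame \<Rightarrow> (nat \<Rightarrow> nat \<Rightarrow> real) \<Rightarrow> bool" where
  "peer_policy g pol \<longleftrightarrow>
     (\<forall>s\<in>states g.
        (\<forall>a2. pol s a2 \<ge> 0) \<and>
        (\<forall>a2. a2 \<notin> act2 g \<longrightarrow> pol s a2 = 0) \<and>
        (\<Sum>a2\<in>act2 g. pol s a2) = 1)"

definition induced_trans :: "mgame \<Rightarrow> (nat \<Rightarrow> nat \<Rightarrow> real) \<Rightarrow> nat \<Rightarrow> nat \<Rightarrow> nat \<Rightarrow> real" where
  "induced_trans g pol s a1 s' = (\<Sum>a2\<in>act2 g. trans g s a1 a2 s' * pol s a2)"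

definition successful :: "mgame \<Rightarrow> (nat \<Rightarrow> nat \<Rightarrow> real) \<Rightarrow> (nat \<times> nat) list set" where
  "successful g pol = {\<tau>. \<tau> \<noteq> [] \<and> length \<tau> \<le> horizon g \<and>
      fst (hd \<tau>) = init g \<and>
      (\<forall>i < length \<tau>. fst (\<tau> ! i) \<in> states g \<and> snd (\<tau> ! i) \<in> act1 g) \<and>
      (\<forall>i. Suc i < length \<tau> \<longrightarrow>
           induced_trans g pol (fst (\<tau> ! i)) (snd (\<tau> ! i)) (fst (\<tau> ! Suc i)) > 0) \<and>
      fst (last \<tau>) \<in> goal g \<and>
      (\<forall>i. Suc i < length \<tau> \<longrightarrow> fst (\<tau> ! i) \<notin> goal g)}"

definition core_words :: "nat \<Rightarrow> 'b list set \<Rightarrow> 'b list set" where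
  "core_words H W =
     {u. length u \<le> H \<and> (\<forall>w\<in>W. subseq u w) \<and>
         \<not> (\<exists>v. length v \<le> H \<and> (\<forall>w\<in>W. subseq v w) \<and> subseq u v \<and> u \<noteq> v)}"

definition core :: "mgame \<Rightarrow> (nat \<times> nat \<Rightarrow> 'b) \<Rightarrow> (nat \<Rightarrow> nat \<Rightarrow> real) \<Rightarrow> 'b list set" where
  "core g \<phi> pol = core_words (horizon g) (map \<phi> ` successful g pol)"

definition core_noterm :: "mgame \<Rightarrow> (nat \<times> nat \<Rightarrow> 'b) \<Rightarrow> (nat \<Rightarrow> nat \<Rightarrow> real) \<Rightarrow> 'b list set" where
  "core_noterm g \<phi> pol = core_words (horizon g) ((\<lambda>\<tau>. butlast (map \<phi> \<tau>)) ` successful g pol)"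

end

theory Submission
  imports Defs
begin

text \<open>The peer's first action decides through which of two intermediate states the
focal agent passes on its way to the goal. Against a deterministic peer the induced
MDP has a single successful trajectory, which is then its own invariant core; changing
the peer's action changes the intermediate state, so the cores before and after the
update differ, and they still differ once the common terminal symbol is dropped.\<close>

lemma core_words_singleton:
  assumes "length w \<le> H"
  shows "core_words H {w} = {w}"
  using assms unfolding core_words_def by (auto dest: subseq_order.antisym)

definition fork_game :: mgame where
  "fork_game = \<lparr> states = {0, 1, 2, 3}, act1 = {0}, act2 = {0, 1},
     trans = (\<lambda>s a1 a2 s'. if s = 0 then (if s' = a2 + 1 then 1 else 0)
                          else if s' = 3 then 1 else 0),
     rew1 = (\<lambda>_ _ _. 0), horizon = 3, goal = {3}, init = 0 \<rparr>"

definition pure_peer :: "nat \<Rightarrow> nat \<Rightarrow> nat \<Rightarrow> real" where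
  "pure_peer b s a2 = (if a2 = b then 1 else 0)"

definition fork_path :: "nat \<Rightarrow> (nat \<times> nat) list" where
  "fork_path b = [(0, 0), (b + 1, 0), (3, 0)]"

lemma wf_fork_game: "wf_game fork_game"
  by (simp add: wf_game_def fork_game_def)

lemma peer_policy_pure_peer: "b \<in> {0, 1} \<Longrightarrow> peer_policy fork_game (pure_peer b)"
  by (auto simp: peer_policy_def fork_game_def pure_peer_def)

lemma induced_trans_pure_peer_pos_iff:
  assumes "b \<in> {0, 1}"
  shows "0 < induced_trans fork_game (pure_peer b) s a1 s' \<longleftrightarrow>
           s' = (if s = 0 then b + 1 else 3)"
  using assms by (auto simp: induced_trans_def fork_game_def pure_peer_def)

lemma successful_nth_fork_path:
  assumes b: "b \<in> {0, 1}" and t: "t \<in> successful fork_game (pure_peer b)"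
    and i: "i < length t"
  shows "t ! i = fork_path b ! i"
  using i
proof (induction i)
  case 0
  then show ?case
    using t by (cases t) (auto simp: successful_def fork_game_def fork_path_def)
next
  case (Suc i)
  have "length t \<le> 3" and "snd (t ! Suc i) = 0"
    and "0 < induced_trans fork_game (pure_peer b) (fst (t ! i)) (snd (t ! i))
                     (fst (t ! Suc i))"
    using t Suc.prems by (auto simp: successful_def fork_game_def)
  moreover have "t ! i = fork_path b ! i"
    using Suc by simp
  ultimately show ?case
    using Suc.prems unfolding induced_trans_pure_peer_pos_iff[OF b]
    by (cases "t ! Suc i") (auto simp: fork_path_def less_Suc_eq nth_Cons')
qed

lemma successful_pure_peer:
  assumes b: "b \<in> {0, 1}"
  shows "successful fork_game (pure_peer b) = {fork_path b}"
proof (intro set_eqI iffI)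
  fix t assume t: "t \<in> successful fork_game (pure_peer b)"
  then have "t \<noteq> []" and "length t \<le> 3" and "fst (last t) = 3"
    by (auto simp: successful_def fork_game_def)
  moreover have "last t = fork_path b ! (length t - 1)"
    using successful_nth_fork_path[OF b t] \<open>t \<noteq> []\<close> by (simp add: last_conv_nth)
  ultimately have "length t = 3"
    using b by (auto simp: fork_path_def nth_Cons' split: if_splits)
  with successful_nth_fork_path[OF b t] show "t \<in> {fork_path b}"
    by (simp add: nth_equalityI fork_path_def)
next
  fix t assume "t \<in> {fork_path b}"
  then show "t \<in> successful fork_game (pure_peer b)"
    unfolding successful_def induced_trans_pure_peer_pos_iff[OF b]
    using b by (auto simp: fork_game_def fork_path_def less_Suc_eq nth_Cons')
qed

lemma core_pure_peer:
  assumes b: "b \<in> {0, 1}"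
  shows "core fork_game fst (pure_peer b) = {[0, b + 1, 3]}"
  unfolding core_def successful_pure_peer[OF b]
  by (simp add: core_words_singleton fork_game_def fork_path_def)

lemma core_noterm_pure_peer:
  assumes b: "b \<in> {0, 1}"
  shows "core_noterm fork_game fst (pure_peer b) = {[0, b + 1]}"
  unfolding core_noterm_def successful_pure_peer[OF b]
  by (simp add: core_words_singleton fork_game_def fork_path_def)

theorem proposition1:
  shows "\<exists>(g::mgame) (\<phi>::nat \<times> nat \<Rightarrow> nat) pi_e pi_e1.
           wf_game g \<and> peer_policy g pi_e \<and> peer_policy g pi_e1 \<and>
           successful g pi_e \<noteq> {} \<and> successful g pi_e1 \<noteq> {} \<and>
           (\<exists>u \<in> core g \<phi> pi_e. u \<notin> core g \<phi> pi_e1) \<and>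
           core_noterm g \<phi> pi_e \<inter> core_noterm g \<phi> pi_e1 = {}"
proof (intro exI conjI)
  show "wf_game fork_game" by (rule wf_fork_game)
  show "peer_policy fork_game (pure_peer 0)" "peer_policy fork_game (pure_peer 1)"
    by (simp_all add: peer_policy_pure_peer)
  show "successful fork_game (pure_peer 0) \<noteq> {}" "successful fork_game (pure_peer 1) \<noteq> {}"
    by (simp_all add: successful_pure_peer)
  show "\<exists>u \<in> core fork_game fst (pure_peer 0). u \<notin> core fork_game fst (pure_peer 1)"
    by (simp add: core_pure_peer)
  show "core_noterm fork_game fst (pure_peer 0) \<inter> core_noterm fork_game fst (pure_peer 1) = {}"
    by (simp add: core_noterm_pure_peer)
qed

end
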